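(* In the changepoint model with negative-binomial segment lengths described in the context, for $0<j\le n$ and every integer $i\ge n-j$, $$P(S=i,\,C_n=j\mid Y_{1:n}=y_{1:n})=\frac{\tilde c_{jn}\,\mathrm{NB}(i;q,r)}{\sum_{\ell=n-j}^\infty\mathrm{NB}(\ell;q,r)}.$$
   Context: Let $\mathrm{NB}(\ell;q,r)=\binom{r-1+\ell}{\ell}q^r(1-q)^\ell$ ($\ell=0,1,2,\dots$) be the negative binomial probability mass function with success probability $q\in(0,1)$ and number of successes $r\in\mathbb N_{\ge1}$. Model: fix $n\ge1$ and data $y_1,\dots,y_n$; $(\mathbb X,\mathcal X)$, $(\mathbb Y,\mathcal Y)$ standard Borel, $\psi$ $\sigma$-finite on $\mathbb Y$, $\mathcal J$ a probability measure on $\mathbb X$. Let $q_{0i}\in[0,1]$ ($i\ge1$) be arbitrary and for $0<j<i$ let $q_{ji}=\sum_{\ell\ge i-j}\mathrm{NB}(\ell;q,r)/\sum_{\ell\ge i-j-1}\mathrm{NB}(\ell;q,r)$. The changepoint process $(C_i)_{i\ge1}$, $C_i\in\{0,\dots,i\}$, is a Markov chain with $P(C_1=0)=q_{01}$, $P(C_1=1)=1-q_{01}$, and for $i\ge2$: $P(C_i=j\mid C_{i-1}=j)=q_{ji}$, $P(C_i=i\mid C_{i-1}=j)=1-q_{ji}$; it is defined for all $i\ge1$ (beyond $n$). For $i=1,\dots,n$: $X_1\sim\mathcal J$; for $i\ge2$, $X_i\sim\mathcal J$ (fresh) if $C_i=i$ and $X_i=X_{i-1}$ if $C_i<i$; $Y_i$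 depends on all other variables only through $X_i$ with density $p(Y_i=y\mid X_i=x)$ w.r.t. $\psi$; given $C_n$, the future chain $(C_k)_{k>n}$ is independent of $X_{1:n},Y_{1:n},C_{1:n-1}$. Assume $\int\prod_{\ell=j}^ip(Y_\ell=y_\ell\mid X_\ell=x)\mathcal J(dx)>0$ for $0<j\le i\le n$. Let $\tau=\min\{k>n:C_k=k\}$ and $S=\tau-1-C_n$ (the length, counted as end minus start, of the segment containing $n$). Let $\tilde c_{jn}=P(C_n=j\mid Y_{1:n}=y_{1:n})$. *)

theory Defs
  imports "HOL-Probability.Probability"
begin

definition NB :: "real \<Rightarrow> nat \<Rightarrow> nat \<Rightarrow> real" where
  "NB q r l = real ((r - 1 + l) choose l) * q ^ r * (1 - q) ^ l"

definition NBtail :: "real \<Rightarrow> nat \<Rightarrow> nat \<Rightarrow> real" where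
  "NBtail q r k = (\<Sum>l. NB q r (l + k))"

definition qtr :: "(nat \<Rightarrow> real) \<Rightarrow> real \<Rightarrow> nat \<Rightarrow> nat \<Rightarrow> nat \<Rightarrow> real" where
  "qtr q0 q r j i = (if j = 0 then q0 i else NBtail q r (i - j) / NBtail q r (i - j - 1))"

text \<open>Law of the changepoint chain: P(C_1 = c1) and P(C_i = c' | C_{i-1} = j).\<close>
definition cp_init :: "(nat \<Rightarrow> real) \<Rightarrow> nat \<Rightarrow> real" where
  "cp_init q0 c1 = (if c1 = 0 then q0 1 else if c1 = 1 then 1 - q0 1 else 0)"

definition cp_step :: "(nat \<Rightarrow> real) \<Rightarrow> real \<Rightarrow> nat \<Rightarrow> nat \<Rightarrow> nat \<Rightarrow> nat \<Rightarrow> real" where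
  "cp_step q0 q r i j c' =
     (if c' = j then qtr q0 q r j i else if c' = i then 1 - qtr q0 q r j i else 0)"

definition cp_prob :: "(nat \<Rightarrow> real) \<Rightarrow> real \<Rightarrow> nat \<Rightarrow> nat \<Rightarrow> (nat \<Rightarrow> nat) \<Rightarrow> real" where
  "cp_prob q0 q r m c = cp_init q0 (c 1) * (\<Prod>i\<in>{2..m}. cp_step q0 q r i (c (i - 1)) (c i))"

definition paths :: "nat \<Rightarrow> (nat \<Rightarrow> nat) set" where
  "paths m = Pi\<^sub>E {1..m} (\<lambda>k. {0..k})"

text \<open>X_k is drawn fresh from J iff k = 1 or C_k = k; otherwise X_k = X_{k-1}.
  seg_start c l is the index of the fresh draw that X_l copies.\<close>
definition fresh :: "(nat \<Rightarrow> nat) \<Rightarrow> nat \<Rightarrow> bool" where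
  "fresh c k = (k = 1 \<or> c k = k)"

definition seg_start :: "(nat \<Rightarrow> nat) \<Rightarrow> nat \<Rightarrow> nat" where
  "seg_start c l = Max {k \<in> {1..l}. fresh c k}"

text \<open>Conditional density of Y_{1:n} at y_{1:n} given C_{1:n} = c_{1:n}
  (X's integrated out: one fresh J-draw per segment).\<close>
definition lik :: "'x measure \<Rightarrow> ('x \<Rightarrow> 'y \<Rightarrow> real) \<Rightarrow> (nat \<Rightarrow> 'y) \<Rightarrow> nat \<Rightarrow> (nat \<Rightarrow> nat) \<Rightarrow> real" where
  "lik J p y n c =
     (\<Prod>s\<in>{s \<in> {1..n}. fresh c s}.
        \<integral>x. (\<Prod>l\<in>{l \<in> {1..n}. seg_start c l = s}. p x (y l)) \<partial>J)"

text \<open>Joint density of (event E on C_{1:m}, Y_{1:n} = y_{1:n}) for m >= n, and the posterior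
  P(E | Y_{1:n} = y_{1:n}) as the ratio of densities (Bayes' rule).\<close>
definition joint :: "'x measure \<Rightarrow> ('x \<Rightarrow> 'y \<Rightarrow> real) \<Rightarrow> (nat \<Rightarrow> 'y) \<Rightarrow> (nat \<Rightarrow> real) \<Rightarrow> real \<Rightarrow> nat
    \<Rightarrow> nat \<Rightarrow> nat \<Rightarrow> ((nat \<Rightarrow> nat) \<Rightarrow> bool) \<Rightarrow> real" where
  "joint J p y q0 q r n m E =
     (\<Sum>c\<in>paths m. if E c then cp_prob q0 q r m c * lik J p y n c else 0)"

definition posterior :: "'x measure \<Rightarrow> ('x \<Rightarrow> 'y \<Rightarrow> real) \<Rightarrow> (nat \<Rightarrow> 'y) \<Rightarrow> (nat \<Rightarrow> real) \<Rightarrow> real \<Rightarrow> nat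
    \<Rightarrow> nat \<Rightarrow> nat \<Rightarrow> ((nat \<Rightarrow> nat) \<Rightarrow> bool) \<Rightarrow> real" where
  "posterior J p y q0 q r n m E =
     joint J p y q0 q r n m E / joint J p y q0 q r n n (\<lambda>_. True)"

text \<open>The event S = i, where tau = min{k > n. C_k = k} and S = tau - 1 - C_n
  (i.e. tau = i + C_n + 1).\<close>
definition S_is :: "nat \<Rightarrow> nat \<Rightarrow> (nat \<Rightarrow> nat) \<Rightarrow> bool" where
  "S_is n i c = (let t = i + c n + 1 in n < t \<and> c t = t \<and> (\<forall>k\<in>{n<..<t}. c k \<noteq> k))"

end

theory Submission
  imports Defs
begin

text \<open>Given \<open>C\<^sub>n = j > 0\<close>, every changepoint path of positive probability in the event
  \<open>S = i\<close> is determined up to time \<open>m = i + j + 1\<close> by \<open>C\<^sub>1 ... C\<^sub>n\<close>: the segment started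
  at \<open>j\<close> survives through \<open>m - 1\<close> and a new one starts at \<open>m\<close>. The survival probabilities
  \<open>q\<^sub>j\<^sub>k\<close> telescope, and together with the final hazard they contribute the factor
  \<open>NB(i) / (\<Sum>l \<ge> n - j. NB(l))\<close>, while the likelihood of \<open>y\<^sub>1 ... y\<^sub>n\<close> only sees
  \<open>C\<^sub>1 ... C\<^sub>n\<close>. So the joint density of \<open>{S = i, C\<^sub>n = j}\<close> and the data is that of
  \<open>{C\<^sub>n = j}\<close> times this factor, and Bayes' rule divides both by the same evidence.\<close>

lemma NB_eq_pmf_neg_binomial:
  assumes "0 < q" "q \<le> 1" "1 \<le> r"
  shows "NB q r l = pmf (neg_binomial_pmf r q) l"
  using assms by (subst pmf_neg_binomial) (auto simp: NB_def add.commute)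

lemma summable_NB:
  assumes "0 < q" "q \<le> 1" "1 \<le> r"
  shows "summable (NB q r)"
proof -
  have "summable (\<lambda>l. norm (pmf (neg_binomial_pmf r q) l))"
    using pmf_abs_summable[of "neg_binomial_pmf r q" UNIV] by (simp add: abs_summable_on_nat_iff')
  then have "summable (pmf (neg_binomial_pmf r q))"
    by (rule summable_norm_cancel)
  moreover have "NB q r = pmf (neg_binomial_pmf r q)"
    using NB_eq_pmf_neg_binomial[OF assms] by (rule ext)
  ultimately show ?thesis by simp
qed

lemma NB_pos:
  assumes "0 < q" "q < 1"
  shows "0 < NB q r l"
  using assms unfolding NB_def by simp

lemma summable_NBtail_terms:
  assumes "0 < q" "q \<le> 1" "1 \<le> r"
  shows "summable (\<lambda>l. NB q r (l + k))"
  using summable_NB[OF assms] by (rule summable_ignore_initial_segment)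

lemma NBtail_Suc:
  assumes "0 < q" "q \<le> 1" "1 \<le> r"
  shows "NBtail q r k = NB q r k + NBtail q r (Suc k)"
  using suminf_split_head[OF summable_NBtail_terms[OF assms, of k]]
  unfolding NBtail_def by simp

lemma NBtail_pos:
  assumes "0 < q" "q < 1" "1 \<le> r"
  shows "0 < NBtail q r k"
  unfolding NBtail_def
  using assms by (intro suminf_pos summable_NBtail_terms NB_pos) auto

lemma one_minus_qtr:
  assumes "0 < q" "q < 1" "1 \<le> r" "0 < j" "j < i"
  shows "1 - qtr q0 q r j i = NB q r (i - j - 1) / NBtail q r (i - j - 1)"
proof -
  have "i - j = Suc (i - j - 1)" using \<open>j < i\<close> by simp
  then show ?thesis
    using NBtail_Suc[of q r "i - j - 1"] NBtail_pos[of q r "i - j - 1"] assms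
    by (simp add: qtr_def field_simps)
qed

lemma finite_paths: "finite (paths m)"
  unfolding paths_def by (intro finite_PiE) auto

lemma cp_prob_cong:
  assumes "1 \<le> m" "\<And>k. k \<in> {1..m} \<Longrightarrow> c k = c' k"
  shows "cp_prob q0 q r m c = cp_prob q0 q r m c'"
proof -
  have "c (k - 1) = c' (k - 1)" if "k \<in> {2..m}" for k
    using that by (intro assms(2)) auto
  then show ?thesis
    unfolding cp_prob_def using assms by (auto intro!: prod.cong)
qed

lemma cp_prob_split:
  assumes "1 \<le> n" "n \<le> m"
  shows "cp_prob q0 q r m c
    = cp_prob q0 q r n c * (\<Prod>k\<in>{n<..m}. cp_step q0 q r k (c (k - 1)) (c k))"
proof -
  have "{2..m} = {2..n} \<union> {n<..m}" "{2..n} \<inter> {n<..m} = {}"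
    using assms by auto
  then show ?thesis
    unfolding cp_prob_def by (simp add: prod.union_disjoint mult.assoc)
qed

lemma lik_cong:
  assumes "\<And>k. k \<in> {1..n} \<Longrightarrow> c k = c' k"
  shows "lik J p y n c = lik J p y n c'"
proof -
  have fresh_eq: "fresh c k = fresh c' k" if "k \<in> {1..n}" for k
    using assms[OF that] unfolding fresh_def by simp
  have "seg_start c l = seg_start c' l" if "l \<in> {1..n}" for l
  proof -
    have "{k \<in> {1..l}. fresh c k} = {k \<in> {1..l}. fresh c' k}"
      using fresh_eq that by auto
    then show ?thesis unfolding seg_start_def by simp
  qed
  then have "{l \<in> {1..n}. seg_start c l = s} = {l \<in> {1..n}. seg_start c' l = s}" for s
    by auto
  moreover have "{s \<in> {1..n}. fresh c s} = {s \<in> {1..n}. fresh c' s}"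
    using fresh_eq by auto
  ultimately show ?thesis unfolding lik_def by simp
qed

definition extend_segment :: "nat \<Rightarrow> nat \<Rightarrow> (nat \<Rightarrow> nat) \<Rightarrow> nat \<Rightarrow> nat" where
  "extend_segment n m c k =
     (if k \<in> {1..n} then c k else if k \<in> {n<..<m} then c n else if k = m then m else undefined)"

lemma paths_le:
  assumes "c \<in> paths n" "k \<in> {1..n}"
  shows "c k \<le> k"
  using assms unfolding paths_def by auto

lemma extend_segment_in_paths:
  assumes "c \<in> paths n" "1 \<le> n" "n < m"
  shows "extend_segment n m c \<in> paths m"
proof -
  have "c n \<le> n" using paths_le[OF assms(1), of n] assms(2) by simp
  then have "extend_segment n m c k \<in> {0..k}" if "k \<in> {1..m}" for k
    using that paths_le[OF assms(1), of k] by (auto simp: extend_segment_def)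
  moreover have "extend_segment n m c k = undefined" if "k \<notin> {1..m}" for k
    using that assms(3) by (auto simp: extend_segment_def)
  ultimately show ?thesis
    unfolding paths_def by (auto simp: PiE_iff extensional_def)
qed

lemma S_is_extend_segment:
  assumes "c \<in> paths n" "1 \<le> n" "n < m"
  shows "S_is n (m - 1 - c n) (extend_segment n m c)"
proof -
  have "c n \<le> n" using paths_le[OF assms(1), of n] assms(2) by simp
  then show ?thesis
    using assms(2,3) unfolding S_is_def extend_segment_def Let_def by auto
qed

lemma inj_on_extend_segment: "inj_on (extend_segment n m) (paths n)"
proof
  fix c c' assume "c \<in> paths n" "c' \<in> paths n" and eq: "extend_segment n m c = extend_segment n m c'"
  have "c k = c' k" if "k \<in> {1..n}" for k
    using fun_cong[OF eq, of k] that unfolding extend_segment_def by simp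
  with \<open>c \<in> paths n\<close> \<open>c' \<in> paths n\<close> show "c = c'"
    unfolding paths_def by (intro PiE_ext)
qed

text \<open>A path of positive probability either stays in its segment or starts a new one at each
  step, so excluding new segments strictly between \<open>n\<close> and \<open>m\<close> forces it to stay.\<close>
lemma cp_prob_nonzero_imp_extend_segment:
  assumes "c \<in> paths m" "1 \<le> n" "n < m" "c m = m" "\<forall>k\<in>{n<..<m}. c k \<noteq> k"
    and "cp_prob q0 q r m c \<noteq> 0"
  shows "c = extend_segment n m (restrict c {1..n})"
proof
  have stay_or_jump: "c k = c (k - 1) \<or> c k = k" if "k \<in> {2..m}" for k
  proof -
    have "(\<Prod>k\<in>{2..m}. cp_step q0 q r k (c (k - 1)) (c k)) \<noteq> 0"
      using assms(6) unfolding cp_prob_def by (metis mult_zero_right)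
    then have "cp_step q0 q r k (c (k - 1)) (c k) \<noteq> 0"
      using that by (simp add: prod_zero_iff)
    then show ?thesis unfolding cp_step_def by (auto split: if_splits)
  qed
  have stay: "c k = c n" if "n \<le> k" "k < m" for k
    using that
  proof (induction k rule: dec_induct)
    case (step k)
    have "Suc k \<in> {2..m}" "c (Suc k) \<noteq> Suc k"
      using step.hyps step.prems assms(2,5) by auto
    then show ?case
      using stay_or_jump[of "Suc k"] step.IH step.prems by simp
  qed simp
  fix k
  show "c k = extend_segment n m (restrict c {1..n}) k"
  proof (cases "k \<in> {1..m}")
    case True
    then consider "k \<le> n" | "n < k" "k < m" | "k = m" by force
    then show ?thesis
    proof cases
      case 1
      then show ?thesis using True by (simp add: extend_segment_def)
    next
      case 2
      then show ?thesis using stay[of k] assms(2) by (simp add: extend_segment_def)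
    next
      case 3
      then show ?thesis using assms(3,4) by (simp add: extend_segment_def)
    qed
  next
    case False
    then have "c k = undefined"
      using assms(1) unfolding paths_def by (auto simp: PiE_iff extensional_def)
    then show ?thesis
      using False assms(3) unfolding extend_segment_def by auto
  qed
qed

lemma cp_prob_extend_segment:
  assumes "0 < q" "q < 1" "1 \<le> r" and "c \<in> paths n" "1 \<le> n" "0 < c n" "n < m"
  shows "cp_prob q0 q r m (extend_segment n m c)
    = cp_prob q0 q r n c * NB q r (m - 1 - c n) / NBtail q r (n - c n)"
proof -
  let ?e = "extend_segment n m c" and ?j = "c n" and ?T = "NBtail q r"
  have j_le: "?j \<le> n" using paths_le[OF assms(4), of n] assms(5) by simp
  have e_stay: "?e k = ?j" if "n \<le> k" "k < m" for k
    using that assms(5) unfolding extend_segment_def by auto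
  have T_pos: "0 < ?T t" for t using NBtail_pos assms(1-3) by blast
  have "(\<Prod>k\<in>{n<..<m}. cp_step q0 q r k (?e (k - 1)) (?e k))
      = (\<Prod>k = Suc n..m - 1. ?T (k - ?j) / ?T (k - 1 - ?j))"
    using assms(6) j_le e_stay
    by (intro prod.cong) (auto simp: cp_step_def qtr_def diff_commute)
  also have "\<dots> = ?T (m - 1 - ?j) / ?T (n - ?j)"
    using prod_telescope''[of n "m - 1" "\<lambda>k. ?T (k - ?j)"] T_pos assms(7)
    by (simp add: less_imp_neq[OF T_pos, symmetric])
  finally have survive: "(\<Prod>k\<in>{n<..<m}. cp_step q0 q r k (?e (k - 1)) (?e k))
      = ?T (m - 1 - ?j) / ?T (n - ?j)" .
  have "?e (m - 1) = ?j"
    using assms(7) by (intro e_stay) auto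
  moreover have "?e m = m" "m \<noteq> ?j"
    using assms(7) j_le by (auto simp: extend_segment_def)
  ultimately have "cp_step q0 q r m (?e (m - 1)) (?e m) = 1 - qtr q0 q r ?j m"
    unfolding cp_step_def by simp
  also have "\<dots> = NB q r (m - 1 - ?j) / ?T (m - 1 - ?j)"
    using one_minus_qtr assms(1-3,6,7) j_le by (simp add: diff_commute)
  finally have hazard: "cp_step q0 q r m (?e (m - 1)) (?e m) = NB q r (m - 1 - ?j) / ?T (m - 1 - ?j)" .
  have "cp_prob q0 q r n ?e = cp_prob q0 q r n c"
    using assms(5) by (intro cp_prob_cong) (auto simp: extend_segment_def)
  moreover have "{n<..m} = insert m {n<..<m}" using assms(7) by auto
  ultimately show ?thesis
    using cp_prob_split[of n m q0 q r ?e] survive hazard T_pos[of "m - 1 - ?j"] assms(5,7)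
    by simp
qed

lemma joint_S_is:
  assumes "0 < q" "q < 1" "1 \<le> r" and "0 < j" "j \<le> n" "n - j \<le> i"
  shows "joint J p y q0 q r n (i + j + 1) (\<lambda>c. S_is n i c \<and> c n = j)
    = joint J p y q0 q r n n (\<lambda>c. c n = j) * NB q r i / NBtail q r (n - j)"
proof -
  define m where "m = i + j + 1"
  define P where "P = {c \<in> paths n. c n = j}"
  define f where "f c = cp_prob q0 q r m c * lik J p y n c" for c
  have n_bounds: "1 \<le> n" "n < m" using assms(4-6) unfolding m_def by auto
  have image: "extend_segment n m c \<in> {c \<in> paths m. S_is n i c \<and> c n = j}" if "c \<in> P" for c
  proof -
    have "c \<in> paths n" "m - 1 - c n = i" using that unfolding P_def m_def by auto
    moreover have "extend_segment n m c n = j" using that n_bounds unfolding P_def extend_segment_def by simp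
    ultimately show ?thesis
      using extend_segment_in_paths[OF _ n_bounds] S_is_extend_segment[OF _ n_bounds] unfolding S_is_def by auto
  qed
  have outside: "f c = 0"
    if "c \<in> {c \<in> paths m. S_is n i c \<and> c n = j}" "c \<notin> extend_segment n m ` P" for c
  proof (rule ccontr)
    assume "f c \<noteq> 0"
    then have "c = extend_segment n m (restrict c {1..n})"
      using that(1) n_bounds
      by (intro cp_prob_nonzero_imp_extend_segment) (auto simp: f_def S_is_def m_def)
    moreover have "restrict c {1..n} \<in> P"
      using that(1) n_bounds unfolding P_def paths_def by (auto simp: PiE_iff)
    ultimately show False using that(2) by blast
  qed
  have f_extend: "f (extend_segment n m c)
      = cp_prob q0 q r n c * lik J p y n c * (NB q r i / NBtail q r (n - j))" if "c \<in> P" for c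
  proof -
    have "lik J p y n (extend_segment n m c) = lik J p y n c"
      by (rule lik_cong) (simp add: extend_segment_def)
    then show ?thesis
      using that cp_prob_extend_segment[OF assms(1-3) _ n_bounds(1) _ n_bounds(2), of c q0] assms(4)
      unfolding f_def P_def m_def by simp
  qed
  have "joint J p y q0 q r n m (\<lambda>c. S_is n i c \<and> c n = j)
      = (\<Sum>c\<in>{c \<in> paths m. S_is n i c \<and> c n = j}. f c)"
    unfolding joint_def f_def by (rule sum.inter_filter[symmetric, OF finite_paths])
  also have "\<dots> = (\<Sum>c\<in>extend_segment n m ` P. f c)"
    using image outside finite_paths by (intro sum.mono_neutral_right) auto
  also have "\<dots> = (\<Sum>c\<in>P. f (extend_segment n m c))"
    using inj_on_subset[OF inj_on_extend_segment] by (simp add: P_def sum.reindex)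
  also have "\<dots> = (\<Sum>c\<in>P. cp_prob q0 q r n c * lik J p y n c) * (NB q r i / NBtail q r (n - j))"
    by (simp add: f_extend sum_distrib_right sum_divide_distrib)
  also have "(\<Sum>c\<in>P. cp_prob q0 q r n c * lik J p y n c) = joint J p y q0 q r n n (\<lambda>c. c n = j)"
    unfolding joint_def P_def by (rule sum.inter_filter[OF finite_paths])
  finally show ?thesis unfolding m_def by simp
qed

theorem mainTheorem14:
  fixes J :: "'x measure" and \<Psi> :: "'y measure" and p :: "'x \<Rightarrow> 'y \<Rightarrow> real"
    and y :: "nat \<Rightarrow> 'y" and q0 :: "nat \<Rightarrow> real" and q :: real and r n j i :: nat
  assumes "prob_space J" and "sigma_finite_measure \<Psi>"
    and "(\<lambda>(x, w). p x w) \<in> borel_measurable (J \<Otimes>\<^sub>M \<Psi>)"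
    and "\<forall>x w. 0 \<le> p x w"
    and "\<forall>x\<in>space J. (\<integral>\<^sup>+ w. ennreal (p x w) \<partial>\<Psi>) = 1"
    and "\<forall>l\<in>{1..n}. y l \<in> space \<Psi>"
    and "\<forall>k. 0 \<le> q0 k \<and> q0 k \<le> 1"
    and "0 < q" and "q < 1" and "1 \<le> r" and "1 \<le> n"
    and "\<forall>a b. 0 < a \<and> a \<le> b \<and> b \<le> n \<longrightarrow>
           integrable J (\<lambda>x. \<Prod>l\<in>{a..b}. p x (y l)) \<and>
           0 < (\<integral>x. (\<Prod>l\<in>{a..b}. p x (y l)) \<partial>J)"
    and "0 < j" and "j \<le> n" and "n - j \<le> i"
  shows "posterior J p y q0 q r n (i + j + 1) (\<lambda>c. S_is n i c \<and> c n = j)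
         = posterior J p y q0 q r n n (\<lambda>c. c n = j) * NB q r i / (\<Sum>l. NB q r (l + (n - j)))"
  using joint_S_is[of q r j n i J p y q0] assms(8-10,13-15)
  unfolding posterior_def NBtail_def by simp

end
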